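(* Fix $\lambda\in(0,\infty)$ and positive integers $n,m$. Let $\mathcal{M}$ be the set of $n\times m$ matrices with all entries positive, and let $\Delta^+_n$ and $\Delta^+_m$ be the sets of probability vectors of length $n$ and $m$ with all entries positive. Define $\Phi:\mathcal{M}\times\Delta^+_n\times\Delta^+_m\to\mathcal{M}$ by letting $\Phi(M,\mathbf{r},\mathbf{c})$ be the limit of $(\mathbf{r},\mathbf{c})$-Sinkhorn scaling applied to the matrix $M^{[\lambda]}$. Then $\Phi$ is $C^\infty$.
   Context: $M^{[\lambda]}$ denotes the matrix with entries $(M_{ij})^{\lambda}$. $(\mathbf{r},\mathbf{c})$-Sinkhorn scaling of a non-negative matrix $A$ is the iterated alternation of rescaling each row $i$ so that its sum equals $r_i$ and rescaling each column $j$ so that its sum equals $c_j$; for positive matrices and positive probability vectors this converges to the unique matrix of the form $D_1 A D_2$ ($D_1,D_2$ positive diagonal) with row sums $\mathbf{r}$ and column sums $\mathbf{c}$. $\Delta^+_n\times\Delta^+_m$ is regarded as an open subset of the product of the affine hyperplanes $\{\sum_i r_i=1\}$, $\{\sum_j c_j=1\}$. *)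

theory Defs
  imports "HOL-Analysis.Analysis"
begin

text \<open>A function is C-infinity on S if all iterated (Frechet) derivatives exist
  on S and are continuous.  Since iterated derivatives change type, we phrase this
  via directional derivatives: there is a family F of functions containing f, all
  continuous on S, closed under taking directional derivatives x \<mapsto> g' x v, where
  g' x is a Frechet derivative of g at x within S.  In finite dimensions this is
  exactly C-infinity.  Derivatives are taken within S, so S may be a relatively
  open subset of an affine subspace.\<close>

definition smooth_on :: "'a::euclidean_space set \<Rightarrow> ('a \<Rightarrow> 'b::real_normed_vector) \<Rightarrow> bool" where
  "smooth_on S f \<longleftrightarrow>
     (\<exists>F. f \<in> F \<and>
          (\<forall>g\<in>F. continuous_on S g \<and>
             (\<exists>g'. (\<forall>x\<in>S. (g has_derivative g' x) (at x within S)) \<and>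
                   (\<forall>v. (\<lambda>x. g' x v) \<in> F))))"

definition pos_matrices :: "(real^'m^'n) set" where
  "pos_matrices = {M. \<forall>i j. M $ i $ j > 0}"

definition pos_simplex :: "(real^'n) set" where
  "pos_simplex = {r. (\<forall>i. r $ i > 0) \<and> (\<Sum>i\<in>UNIV. r $ i) = 1}"

definition entry_pow :: "real \<Rightarrow> real^'m^'n \<Rightarrow> real^'m^'n" where
  "entry_pow lam M = (\<chi> i j. (M $ i $ j) powr lam)"

definition row_scale :: "real^'n \<Rightarrow> real^'m^'n \<Rightarrow> real^'m^'n" where
  "row_scale r A = (\<chi> i j. r $ i * A $ i $ j / (\<Sum>k\<in>UNIV. A $ i $ k))"

definition col_scale :: "real^'m \<Rightarrow> real^'m^'n \<Rightarrow> real^'m^'n" where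
  "col_scale c A = (\<chi> i j. c $ j * A $ i $ j / (\<Sum>k\<in>UNIV. A $ k $ j))"

primrec sinkhorn_iter :: "real^'n \<Rightarrow> real^'m \<Rightarrow> real^'m^'n \<Rightarrow> nat \<Rightarrow> real^'m^'n" where
  "sinkhorn_iter r c A 0 = A"
| "sinkhorn_iter r c A (Suc k) = col_scale c (row_scale r (sinkhorn_iter r c A k))"

definition sinkhorn_limit :: "real^'n \<Rightarrow> real^'m \<Rightarrow> real^'m^'n \<Rightarrow> real^'m^'n" where
  "sinkhorn_limit r c A = lim (sinkhorn_iter r c A)"

definition Phi :: "real \<Rightarrow> (real^'m^'n) \<times> (real^'n) \<times> (real^'m) \<Rightarrow> real^'m^'n" where
  "Phi lam = (\<lambda>(M, r, c). sinkhorn_limit r c (entry_pow lam M))"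

end

theory Submission
  imports Defs
begin

text \<open>Sinkhorn scaling of a positive matrix A converges: the potential
  sum_ij r_i c_j ln (B_ij / A_ij) increases at every half step by a Kullback-Leibler divergence
  and is bounded, which forces the row sums of the iterates to r, and a positive matrix has at
  most one diagonal scaling D1 A D2 with prescribed marginals.  Hence the Sinkhorn limit of
  M^[lam] is exp (u_i + v_j) M_ij^lam for some (u, v).  The map
  (M, u, v) \<mapsto> (M, row sums + sum_i u_i, column sums) of this matrix is smooth and
  injective with injective derivative, so by the inverse function theorem its inverse is smooth;
  Phi is this inverse followed by (M, u, v) \<mapsto> exp (u_i + v_j) M_ij^lam.\<close>

section \<open>Calculus of smooth functions\<close>

lemma smooth_onD:
  assumes "smooth_on S f"
  shows "continuous_on S f"
    and "\<exists>f'. (\<forall>x\<in>S. (f has_derivative f' x) (at x within S)) \<and> (\<forall>v. smooth_on S (\<lambda>x. f' x v))"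
proof -
  obtain F where "f \<in> F" and F: "\<forall>g\<in>F. continuous_on S g \<and>
      (\<exists>g'. (\<forall>x\<in>S. (g has_derivative g' x) (at x within S)) \<and> (\<forall>v. (\<lambda>x. g' x v) \<in> F))"
    using assms unfolding smooth_on_def by blast
  then show "continuous_on S f" by blast
  from F \<open>f \<in> F\<close> obtain f' where f': "\<forall>x\<in>S. (f has_derivative f' x) (at x within S)"
    and "\<forall>v. (\<lambda>x. f' x v) \<in> F"
    by blast
  then have "smooth_on S (\<lambda>x. f' x v)" for v
    unfolding smooth_on_def using F by blast
  with f' show "\<exists>f'. (\<forall>x\<in>S. (f has_derivative f' x) (at x within S)) \<and> (\<forall>v. smooth_on S (\<lambda>x. f' x v))"
    by blast
qed

inductive_set smooth_hull :: "'a::euclidean_space set \<Rightarrow> ('a \<Rightarrow> 'b::real_normed_vector) set \<Rightarrow> ('a \<Rightarrow> 'b) set"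
  for S F where
  base: "g \<in> F \<Longrightarrow> g \<in> smooth_hull S F"
| smooth: "smooth_on S g \<Longrightarrow> g \<in> smooth_hull S F"
| add: "g \<in> smooth_hull S F \<Longrightarrow> h \<in> smooth_hull S F \<Longrightarrow> (\<lambda>x. g x + h x) \<in> smooth_hull S F"
| scaleR: "g \<in> smooth_hull S F \<Longrightarrow> (\<lambda>x. c *\<^sub>R g x) \<in> smooth_hull S F"
| cong: "g \<in> smooth_hull S F \<Longrightarrow> (\<And>x. x \<in> S \<Longrightarrow> h x = g x) \<Longrightarrow> h \<in> smooth_hull S F"

lemma smooth_hull_has_derivative:
  assumes "g \<in> smooth_hull S F"
    and F: "\<And>g. g \<in> F \<Longrightarrow> \<exists>g'. (\<forall>x\<in>S. (g has_derivative g' x) (at x within S)) \<and>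
                                 (\<forall>v. (\<lambda>x. g' x v) \<in> smooth_hull S F)"
  shows "\<exists>g'. (\<forall>x\<in>S. (g has_derivative g' x) (at x within S)) \<and> (\<forall>v. (\<lambda>x. g' x v) \<in> smooth_hull S F)"
  using assms(1)
proof (induction rule: smooth_hull.induct)
  case (base g)
  then show ?case by (rule F)
next
  case (smooth g)
  then obtain g' where "\<forall>x\<in>S. (g has_derivative g' x) (at x within S)" "\<forall>v. smooth_on S (\<lambda>x. g' x v)"
    using smooth_onD(2) by blast
  then show ?case
    by (intro exI[of _ g'] conjI allI smooth_hull.smooth) auto
next
  case (add g h)
  then obtain g' h' where "\<forall>x\<in>S. (g has_derivative g' x) (at x within S)" "\<forall>v. (\<lambda>x. g' x v) \<in> smooth_hull S F"
    and "\<forall>x\<in>S. (h has_derivative h' x) (at x within S)" "\<forall>v. (\<lambda>x. h' x v) \<in> smooth_hull S F"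
    by blast
  then show ?case
    by (intro exI[of _ "\<lambda>x v. g' x v + h' x v"] conjI ballI allI has_derivative_add smooth_hull.add) auto
next
  case (scaleR g c)
  then obtain g' where "\<forall>x\<in>S. (g has_derivative g' x) (at x within S)" "\<forall>v. (\<lambda>x. g' x v) \<in> smooth_hull S F"
    by blast
  then show ?case
    by (intro exI[of _ "\<lambda>x v. c *\<^sub>R g' x v"] conjI ballI allI has_derivative_scaleR_right smooth_hull.scaleR) auto
next
  case (cong g h)
  then obtain g' where g': "\<forall>x\<in>S. (g has_derivative g' x) (at x within S)" "\<forall>v. (\<lambda>x. g' x v) \<in> smooth_hull S F"
    by blast
  have "(h has_derivative g' x) (at x within S)" if "x \<in> S" for x
    by (rule has_derivative_transform_within[where d=1, OF _ _ that]) (use g' that cong.hyps(2) in auto)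
  with g'(2) show ?case by blast
qed

text \<open>The family in the definition of smoothness may be taken to be the hull of F: sums, scalar
  multiples, functions agreeing on S and functions already known to be smooth all inherit the
  derivative condition, so derivatives of members of F only have to land in the hull.\<close>
lemma smooth_on_coinduct:
  assumes h: "h \<in> smooth_hull S F"
    and F: "\<And>g. g \<in> F \<Longrightarrow> \<exists>g'. (\<forall>x\<in>S. (g has_derivative g' x) (at x within S)) \<and>
                                 (\<forall>v. (\<lambda>x. g' x v) \<in> smooth_hull S F)"
  shows "smooth_on S h"
  unfolding smooth_on_def
proof (rule exI[of _ "smooth_hull S F"], rule conjI[OF h], rule ballI)
  fix g assume "g \<in> smooth_hull S F"
  then show "continuous_on S g \<and> (\<exists>g'. (\<forall>x\<in>S. (g has_derivative g' x) (at x within S)) \<and>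
      (\<forall>v. (\<lambda>x. g' x v) \<in> smooth_hull S F))"
    using smooth_hull_has_derivative[OF _ F] has_derivative_continuous_on by blast
qed

lemma smooth_on_const [simp]: "smooth_on S (\<lambda>x. c)"
proof (rule smooth_on_coinduct[of _ _ "{\<lambda>x. c}"])
  have "(\<lambda>x. 0 *\<^sub>R c) \<in> smooth_hull S {\<lambda>x. c}"
    by (rule smooth_hull.scaleR[OF smooth_hull.base]) simp
  then show "\<exists>g'. (\<forall>x\<in>S. (g has_derivative g' x) (at x within S)) \<and> (\<forall>v. (\<lambda>x. g' x v) \<in> smooth_hull S {\<lambda>x. c})"
    if "g \<in> {\<lambda>x. c}" for g
    using that by (intro exI[of _ "\<lambda>x v. 0"]) auto
qed (rule smooth_hull.base, simp)

lemma smooth_hull_sum: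
  assumes "finite I" "\<And>i. i \<in> I \<Longrightarrow> g i \<in> smooth_hull S F"
  shows "(\<lambda>x. \<Sum>i\<in>I. g i x) \<in> smooth_hull S F"
  using assms
proof (induction I rule: finite_induct)
  case empty
  show ?case by (simp add: smooth_hull.smooth)
next
  case (insert a I)
  then show ?case by (auto intro!: smooth_hull.add)
qed

lemma smooth_on_add:
  assumes "smooth_on S f" "smooth_on S g"
  shows "smooth_on S (\<lambda>x. f x + g x)"
  by (rule smooth_on_coinduct[of _ _ "{}"]) (auto intro: smooth_hull.add smooth_hull.smooth assms)

lemma smooth_on_cong:
  assumes "smooth_on S f" "\<And>x. x \<in> S \<Longrightarrow> g x = f x"
  shows "smooth_on S g"
  by (rule smooth_on_coinduct[of _ _ "{}"]) (auto intro: smooth_hull.cong[OF smooth_hull.smooth] assms)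

lemma smooth_on_sum:
  assumes "finite I" "\<And>i. i \<in> I \<Longrightarrow> smooth_on S (f i)"
  shows "smooth_on S (\<lambda>x. \<Sum>i\<in>I. f i x)"
  by (rule smooth_on_coinduct[of _ _ "{}"]) (auto intro: smooth_hull_sum smooth_hull.smooth assms)

lemma smooth_on_linear:
  fixes f :: "'a::euclidean_space \<Rightarrow> 'b::real_normed_vector"
  assumes "bounded_linear f"
  shows "smooth_on S f"
proof (rule smooth_on_coinduct[of _ _ "{f}"])
  show "\<exists>g'. (\<forall>x\<in>S. (g has_derivative g' x) (at x within S)) \<and> (\<forall>v. (\<lambda>x. g' x v) \<in> smooth_hull S {f})"
    if "g \<in> {f}" for g
    using that assms
    by (intro exI[of _ "\<lambda>x. f"]) (auto intro: smooth_hull.smooth bounded_linear_imp_has_derivative)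
qed (rule smooth_hull.base, simp)

lemma linear_basis_expansion:
  assumes "linear L"
  shows "L v = (\<Sum>b\<in>Basis. (v \<bullet> b) *\<^sub>R L b)"
proof -
  have "L v = L (\<Sum>b\<in>Basis. (v \<bullet> b) *\<^sub>R b)"
    by (simp add: euclidean_representation)
  also have "\<dots> = (\<Sum>b\<in>Basis. (v \<bullet> b) *\<^sub>R L b)"
    using assms by (simp add: linear_sum linear_scale)
  finally show ?thesis .
qed

lemma smooth_on_bilinear:
  assumes "bounded_bilinear mul" "smooth_on S f" "smooth_on S g"
  shows "smooth_on S (\<lambda>x. mul (f x) (g x))"
proof -
  define F where "F = {h. \<exists>a b. smooth_on S a \<and> smooth_on S b \<and> h = (\<lambda>x. mul (a x) (b x))}"
  have F_memI: "(\<lambda>x. mul (a x) (b x)) \<in> F" if "smooth_on S a" "smooth_on S b" for a b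
    unfolding F_def using that by (intro CollectI exI[of _ a] exI[of _ b]) simp
  show ?thesis
  proof (rule smooth_on_coinduct[of _ _ F])
    fix h assume "h \<in> F"
    then obtain a b where ab: "smooth_on S a" "smooth_on S b" "h = (\<lambda>x. mul (a x) (b x))"
      unfolding F_def by blast
    obtain a' where a': "\<forall>x\<in>S. (a has_derivative a' x) (at x within S)" "\<forall>v. smooth_on S (\<lambda>x. a' x v)"
      using smooth_onD(2)[OF ab(1)] by blast
    obtain b' where b': "\<forall>x\<in>S. (b has_derivative b' x) (at x within S)" "\<forall>v. smooth_on S (\<lambda>x. b' x v)"
      using smooth_onD(2)[OF ab(2)] by blast
    show "\<exists>h'. (\<forall>x\<in>S. (h has_derivative h' x) (at x within S)) \<and> (\<forall>v. (\<lambda>x. h' x v) \<in> smooth_hull S F)"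
    proof (intro exI[of _ "\<lambda>x v. mul (a x) (b' x v) + mul (a' x v) (b x)"] conjI ballI allI)
      show "(h has_derivative (\<lambda>v. mul (a x) (b' x v) + mul (a' x v) (b x))) (at x within S)"
        if "x \<in> S" for x
        using that a' b' ab(3) by (auto intro!: bounded_bilinear.FDERIV[OF assms(1)])
      fix v
      have "(\<lambda>x. mul (a x) (b' x v)) \<in> F" "(\<lambda>x. mul (a' x v) (b x)) \<in> F"
        using ab a' b' by (simp_all add: F_memI)
      then show "(\<lambda>x. mul (a x) (b' x v) + mul (a' x v) (b x)) \<in> smooth_hull S F"
        by (intro smooth_hull.add smooth_hull.base)
    qed
  qed (use assms in \<open>intro smooth_hull.base F_memI\<close>)
qed

lemma smooth_on_mult:
  fixes f g :: "'a::euclidean_space \<Rightarrow> 'b::real_normed_algebra"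
  assumes "smooth_on S f" "smooth_on S g"
  shows "smooth_on S (\<lambda>x. f x * g x)"
  using bounded_bilinear_mult assms by (rule smooth_on_bilinear)

lemma smooth_on_scaleR:
  assumes "smooth_on S f" "smooth_on S g"
  shows "smooth_on S (\<lambda>x. f x *\<^sub>R g x)"
  using bounded_bilinear_scaleR assms by (rule smooth_on_bilinear)

lemma smooth_on_inner:
  assumes "smooth_on S f" "smooth_on S g"
  shows "smooth_on S (\<lambda>x. f x \<bullet> g x)"
  using bounded_bilinear_inner assms by (rule smooth_on_bilinear)

lemma smooth_on_prod:
  fixes f :: "'i \<Rightarrow> 'a::euclidean_space \<Rightarrow> 'b::{real_normed_algebra, comm_ring_1}"
  assumes "finite I" "\<And>i. i \<in> I \<Longrightarrow> smooth_on S (f i)"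
  shows "smooth_on S (\<lambda>x. \<Prod>i\<in>I. f i x)"
  using assms by (induction I rule: finite_induct) (auto intro!: smooth_on_mult)

text \<open>The coinductive family for the chain rule consists of the products of a smooth scalar
  function with a smooth function composed with f; the derivative of k at f x, applied to the
  smooth direction f' x v, is expanded in the basis to stay inside it.\<close>
lemma smooth_on_compose:
  fixes f :: "'a::euclidean_space \<Rightarrow> 'c::euclidean_space" and k :: "'c \<Rightarrow> 'b::real_normed_vector"
  assumes k: "smooth_on U k" and f: "smooth_on S f" and fS: "f ` S \<subseteq> U"
  shows "smooth_on S (\<lambda>x. k (f x))"
proof -
  obtain f' where f': "\<forall>x\<in>S. (f has_derivative f' x) (at x within S)" "\<forall>v. smooth_on S (\<lambda>x. f' x v)"
    using smooth_onD(2)[OF f] by blast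
  define F where "F = {h. \<exists>s (k :: 'c \<Rightarrow> 'b). smooth_on S s \<and> smooth_on U k \<and> h = (\<lambda>x. s x *\<^sub>R k (f x))}"
  have F_memI: "(\<lambda>x. s x *\<^sub>R k (f x)) \<in> F" if "smooth_on S s" "smooth_on U k" for s k
    unfolding F_def using that by (intro CollectI exI[of _ s] exI[of _ k]) simp
  show ?thesis
  proof (rule smooth_on_coinduct[of _ _ F])
    show "(\<lambda>x. k (f x)) \<in> smooth_hull S F"
      by (rule smooth_hull.cong[OF smooth_hull.base[OF F_memI[OF smooth_on_const[where c=1] k]]]) simp
  next
    fix h assume "h \<in> F"
    then obtain s k where sk: "smooth_on S s" "smooth_on U k" "h = (\<lambda>x. s x *\<^sub>R k (f x))"
      unfolding F_def by blast
    obtain s' where s': "\<forall>x\<in>S. (s has_derivative s' x) (at x within S)" "\<forall>v. smooth_on S (\<lambda>x. s' x v)"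
      using smooth_onD(2)[OF sk(1)] by blast
    obtain k' where k': "\<forall>y\<in>U. (k has_derivative k' y) (at y within U)" "\<forall>v. smooth_on U (\<lambda>y. k' y v)"
      using smooth_onD(2)[OF sk(2)] by blast
    have dk: "((\<lambda>x. k (f x)) has_derivative (\<lambda>v. k' (f x) (f' x v))) (at x within S)" if "x \<in> S" for x
      using k'(1) fS f'(1) that by (intro has_derivative_in_compose2[of U k k' f S x]) auto
    have lin: "linear (k' (f x))" if "x \<in> S" for x
      using k'(1) fS that has_derivative_linear by blast
    show "\<exists>h'. (\<forall>x\<in>S. (h has_derivative h' x) (at x within S)) \<and> (\<forall>v. (\<lambda>x. h' x v) \<in> smooth_hull S F)"
    proof (intro exI[of _ "\<lambda>x v. s x *\<^sub>R k' (f x) (f' x v) + s' x v *\<^sub>R k (f x)"] conjI ballI allI)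
      show "(h has_derivative (\<lambda>v. s x *\<^sub>R k' (f x) (f' x v) + s' x v *\<^sub>R k (f x))) (at x within S)"
        if "x \<in> S" for x
        unfolding sk(3) using s'(1) that by (intro has_derivative_scaleR dk) auto
      fix v
      have "(\<lambda>x. s x *\<^sub>R k' (f x) (f' x v)) \<in> smooth_hull S F"
      proof (rule smooth_hull.cong[OF smooth_hull_sum])
        show "(\<lambda>x. (s x * (f' x v \<bullet> b)) *\<^sub>R k' (f x) b) \<in> smooth_hull S F" for b
          using sk(1) f'(2) k'(2) by (intro smooth_hull.base F_memI smooth_on_mult smooth_on_inner) auto
        show "s x *\<^sub>R k' (f x) (f' x v) = (\<Sum>b\<in>Basis. (s x * (f' x v \<bullet> b)) *\<^sub>R k' (f x) b)"
          if "x \<in> S" for x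
          using linear_basis_expansion[OF lin[OF that], of "f' x v"] by (simp add: scaleR_sum_right)
      qed simp
      moreover have "(\<lambda>x. s' x v *\<^sub>R k (f x)) \<in> smooth_hull S F"
        using s'(2) sk(2) by (intro smooth_hull.base F_memI) auto
      ultimately show "(\<lambda>x. s x *\<^sub>R k' (f x) (f' x v) + s' x v *\<^sub>R k (f x)) \<in> smooth_hull S F"
        by (rule smooth_hull.add)
    qed
  qed
qed

lemma smooth_on_real_coinduct:
  fixes F :: "(real \<Rightarrow> real) set"
  assumes "f \<in> F"
    and "\<And>g. g \<in> F \<Longrightarrow> \<exists>c h. h \<in> F \<and> (\<forall>x\<in>S. (g has_real_derivative c * h x) (at x within S))"
  shows "smooth_on S f"
proof (rule smooth_on_coinduct[of _ _ F])
  fix g assume "g \<in> F"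
  then obtain c h where "h \<in> F" and h: "\<forall>x\<in>S. (g has_real_derivative c * h x) (at x within S)"
    using assms(2) by blast
  show "\<exists>g'. (\<forall>x\<in>S. (g has_derivative g' x) (at x within S)) \<and> (\<forall>v. (\<lambda>x. g' x v) \<in> smooth_hull S F)"
  proof (intro exI[of _ "\<lambda>x v. (c * v) *\<^sub>R h x"] conjI ballI allI)
    show "(g has_derivative (\<lambda>v. (c * v) *\<^sub>R h x)) (at x within S)" if "x \<in> S" for x
      using h that unfolding has_field_derivative_def
      by (auto elim!: has_derivative_eq_rhs simp: fun_eq_iff)
    show "(\<lambda>x. (c * v) *\<^sub>R h x) \<in> smooth_hull S F" for v
      using \<open>h \<in> F\<close> by (intro smooth_hull.scaleR smooth_hull.base)
  qed
qed (use assms(1) in \<open>rule smooth_hull.base\<close>)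

lemma smooth_on_exp_real: "smooth_on S (exp :: real \<Rightarrow> real)"
proof (rule smooth_on_real_coinduct[of _ "{exp}"])
  show "\<exists>c h. h \<in> {exp} \<and> (\<forall>x\<in>S. (g has_real_derivative c * h x) (at x within S))"
    if "g \<in> {exp}" for g
    using that by (intro exI[of _ 1] exI[of _ exp]) (simp add: has_field_derivative_at_within)
qed simp

lemma smooth_on_powr_real: "smooth_on {0<..} (\<lambda>x::real. x powr a)"
proof (rule smooth_on_real_coinduct[of _ "range (\<lambda>a x. x powr a)"])
  fix g assume "g \<in> range (\<lambda>a (x::real). x powr a)"
  then obtain b where "g = (\<lambda>x. x powr b)" by blast
  then show "\<exists>c h. h \<in> range (\<lambda>a x. x powr a) \<and> (\<forall>x\<in>{0<..}. (g has_real_derivative c * h x) (at x within {0<..}))"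
    by (intro exI[of _ b] exI[of _ "\<lambda>x. x powr (b - 1)"])
      (simp add: has_field_derivative_at_within has_real_derivative_powr)
qed simp

lemma smooth_on_inverse_real: "smooth_on {x. x \<noteq> 0} (inverse :: real \<Rightarrow> real)"
proof (rule smooth_on_real_coinduct[of _ "range (\<lambda>k x. inverse x ^ k)"])
  fix g assume "g \<in> range (\<lambda>k (x::real). inverse x ^ k)"
  then obtain k where g: "g = (\<lambda>x. inverse x ^ k)" by blast
  have "(g has_real_derivative - real k * inverse x ^ (k + 1)) (at x within {x. x \<noteq> 0})"
    if "x \<noteq> 0" for x :: real
  proof -
    have "(g has_real_derivative real k * (- (inverse x ^ Suc (Suc 0)) * inverse x ^ (k - Suc 0))) (at x within {x. x \<noteq> 0})"
      unfolding g using DERIV_inverse[OF that] by (rule DERIV_power)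
    moreover have "real k * (- (inverse x ^ Suc (Suc 0)) * inverse x ^ (k - Suc 0)) = - real k * inverse x ^ (k + 1)"
      by (cases k) (simp_all add: algebra_simps)
    ultimately show ?thesis by (simp only:)
  qed
  then show "\<exists>c h. h \<in> range (\<lambda>k x. inverse x ^ k) \<and>
      (\<forall>x\<in>{x. x \<noteq> 0}. (g has_real_derivative c * h x) (at x within {x. x \<noteq> 0}))"
    by (intro exI[of _ "- real k"] exI[of _ "\<lambda>x. inverse x ^ (k + 1)"] conjI rangeI) auto
next
  show "(inverse :: real \<Rightarrow> real) \<in> range (\<lambda>k x. inverse x ^ k)"
    by (rule range_eqI[of _ _ 1]) (simp add: fun_eq_iff)
qed

lemma smooth_on_exp:
  fixes f :: "'a::euclidean_space \<Rightarrow> real"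
  assumes "smooth_on S f"
  shows "smooth_on S (\<lambda>x. exp (f x))"
  using smooth_on_exp_real[of UNIV] assms by (rule smooth_on_compose) simp

lemma smooth_on_powr:
  fixes f :: "'a::euclidean_space \<Rightarrow> real"
  assumes "smooth_on S f" "\<And>x. x \<in> S \<Longrightarrow> f x > 0"
  shows "smooth_on S (\<lambda>x. f x powr a)"
  using smooth_on_powr_real assms(1) by (rule smooth_on_compose) (use assms(2) in auto)

lemma smooth_on_divide:
  fixes f g :: "'a::euclidean_space \<Rightarrow> real"
  assumes "smooth_on S f" "smooth_on S g" "\<And>x. x \<in> S \<Longrightarrow> g x \<noteq> 0"
  shows "smooth_on S (\<lambda>x. f x / g x)"
proof -
  have "smooth_on S (\<lambda>x. inverse (g x))"
    using smooth_on_inverse_real assms(2) by (rule smooth_on_compose) (use assms(3) in auto)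
  with assms(1) show ?thesis
    unfolding divide_inverse by (rule smooth_on_mult)
qed

lemma smooth_on_bounded_linear_compose:
  fixes f :: "'a::euclidean_space \<Rightarrow> 'c::euclidean_space"
  assumes "bounded_linear l" "smooth_on S f"
  shows "smooth_on S (\<lambda>x. l (f x))"
  using smooth_on_linear[OF assms(1), of UNIV] assms(2) by (rule smooth_on_compose) simp

lemma smooth_on_vec_nth:
  fixes f :: "'a::euclidean_space \<Rightarrow> 'b::euclidean_space ^ 'n"
  assumes "smooth_on S f"
  shows "smooth_on S (\<lambda>x. f x $ i)"
  using bounded_linear_vec_nth assms by (rule smooth_on_bounded_linear_compose)

lemma bounded_linear_axis: "bounded_linear (axis i :: 'a::euclidean_space \<Rightarrow> 'a ^ 'n)"
proof -
  have "linear (axis i :: 'a \<Rightarrow> 'a ^ 'n)"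
    by (rule linearI) (simp_all add: vec_eq_iff axis_def)
  then show ?thesis by (simp add: linear_conv_bounded_linear)
qed

lemma smooth_on_vec_lambda:
  fixes f :: "'i::finite \<Rightarrow> 'a::euclidean_space \<Rightarrow> 'b::euclidean_space"
  assumes "\<And>i. smooth_on S (f i)"
  shows "smooth_on S (\<lambda>x. \<chi> i. f i x)"
proof (rule smooth_on_cong)
  show "smooth_on S (\<lambda>x. \<Sum>i\<in>UNIV. axis i (f i x))"
    using assms by (intro smooth_on_sum smooth_on_bounded_linear_compose[OF bounded_linear_axis]) auto
  show "(\<chi> i. f i x) = (\<Sum>i\<in>UNIV. axis i (f i x))" for x
    by (simp add: vec_eq_iff axis_def if_distrib sum.delta cong: if_cong)
qed

lemma smooth_on_det:
  fixes A :: "'a::euclidean_space \<Rightarrow> real^'n^'n"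
  assumes "\<And>i j. smooth_on S (\<lambda>x. A x $ i $ j)"
  shows "smooth_on S (\<lambda>x. det (A x))"
  unfolding det_def by (intro smooth_on_sum smooth_on_mult smooth_on_const smooth_on_prod assms) simp_all

lemma smooth_on_linear_apply:
  fixes L :: "'a::euclidean_space \<Rightarrow> 'c::euclidean_space \<Rightarrow> 'b::real_normed_vector"
  assumes "\<And>x. x \<in> S \<Longrightarrow> linear (L x)" "\<And>v. smooth_on S (\<lambda>x. L x v)" "smooth_on S w"
  shows "smooth_on S (\<lambda>x. L x (w x))"
proof (rule smooth_on_cong)
  show "smooth_on S (\<lambda>x. \<Sum>b\<in>Basis. (w x \<bullet> b) *\<^sub>R L x b)"
    using assms(2,3) by (intro smooth_on_sum smooth_on_scaleR smooth_on_inner) auto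
  show "L x (w x) = (\<Sum>b\<in>Basis. (w x \<bullet> b) *\<^sub>R L x b)" if "x \<in> S" for x
    using assms(1)[OF that] by (rule linear_basis_expansion)
qed

text \<open>The inverse is given by Cramer's rule.\<close>
lemma smooth_on_inverse_linear:
  fixes L :: "'a::euclidean_space \<Rightarrow> real^'k \<Rightarrow> real^'k"
  assumes lin: "\<And>x. x \<in> S \<Longrightarrow> linear (L x)" and inj: "\<And>x. x \<in> S \<Longrightarrow> inj (L x)"
    and smooth: "\<And>v. smooth_on S (\<lambda>x. L x v)"
  obtains Linv where "\<And>x w. x \<in> S \<Longrightarrow> L x (Linv x w) = w" "\<And>w. smooth_on S (\<lambda>x. Linv x w)"
proof
  define A where "A x = matrix (L x)" for x
  have A_nth: "A x $ i $ j = L x (axis j 1) $ i" for x i j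
    by (simp add: A_def matrix_def)
  have det_nz: "det (A x) \<noteq> 0" if "x \<in> S" for x
    using det_nz_iff_inj[OF lin[OF that]] inj[OF that] by (simp add: A_def)
  define Linv where "Linv x w = (\<chi> k. det (\<chi> i j. if j = k then w $ i else A x $ i $ j) / det (A x))" for x w
  show "L x (Linv x w) = w" if "x \<in> S" for x w
  proof -
    have "A x *v Linv x w = w"
      using cramer[OF det_nz[OF that], of "Linv x w" w] by (simp add: Linv_def)
    then show ?thesis
      using matrix_vector_mul(2)[OF lin[OF that]] by (simp add: A_def fun_eq_iff)
  qed
  show "smooth_on S (\<lambda>x. Linv x w)" for w
    unfolding Linv_def
  proof (intro smooth_on_vec_lambda smooth_on_divide smooth_on_det det_nz)
    show "smooth_on S (\<lambda>x. (\<chi> i j. if j = k then w $ i else A x $ i $ j) $ i $ j)" for k i j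
      by (cases "j = k") (simp_all add: A_nth smooth_on_vec_nth smooth)
    show "smooth_on S (\<lambda>x. A x $ i $ j)" for i j
      by (simp add: A_nth smooth_on_vec_nth smooth)
  qed
qed

text \<open>The coinductive family consists of the smooth functions of D composed with g.\<close>
lemma smooth_on_derivative_factors_through:
  fixes g :: "'a::euclidean_space \<Rightarrow> 'c::euclidean_space" and L :: "'c \<Rightarrow> 'a \<Rightarrow> 'c"
  assumes g_in: "g ` V \<subseteq> D"
    and dg: "\<And>y. y \<in> V \<Longrightarrow> (g has_derivative L (g y)) (at y within V)"
    and L: "\<And>w. smooth_on D (\<lambda>x. L x w)"
  shows "smooth_on V g"
proof -
  define F where "F = {f. \<exists>h :: 'c \<Rightarrow> 'c. smooth_on D h \<and> f = (\<lambda>y. h (g y))}"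
  have F_memI: "(\<lambda>y. h (g y)) \<in> F" if "smooth_on D h" for h :: "'c \<Rightarrow> 'c"
    unfolding F_def using that by (intro CollectI exI[of _ h]) simp
  show ?thesis
  proof (rule smooth_on_coinduct[of _ _ F])
    show "g \<in> smooth_hull V F"
      using smooth_hull.base[OF F_memI[OF smooth_on_linear[OF bounded_linear_ident]]] by simp
  next
    fix f assume "f \<in> F"
    then obtain h where h: "smooth_on D h" "f = (\<lambda>y. h (g y))" unfolding F_def by blast
    obtain h' where h': "\<forall>x\<in>D. (h has_derivative h' x) (at x within D)" "\<forall>v. smooth_on D (\<lambda>x. h' x v)"
      using smooth_onD(2)[OF h(1)] by blast
    show "\<exists>f'. (\<forall>y\<in>V. (f has_derivative f' y) (at y within V)) \<and> (\<forall>v. (\<lambda>y. f' y v) \<in> smooth_hull V F)"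
    proof (intro exI[of _ "\<lambda>y v. h' (g y) (L (g y) v)"] conjI ballI allI)
      show "(f has_derivative (\<lambda>v. h' (g y) (L (g y) v))) (at y within V)" if "y \<in> V" for y
        unfolding h(2) using h'(1) g_in that dg[OF that]
        by (intro has_derivative_in_compose2[of D h h' g V y]) auto
      have "smooth_on D (\<lambda>x. h' x (L x v))" for v
      proof (rule smooth_on_linear_apply[OF _ _ L])
        show "linear (h' x)" if "x \<in> D" for x
          using h'(1) that has_derivative_linear by blast
        show "smooth_on D (\<lambda>x. h' x w)" for w
          using h'(2) by blast
      qed
      then show "(\<lambda>y. h' (g y) (L (g y) v)) \<in> smooth_hull V F" for v
        by (intro smooth_hull.base F_memI)
    qed
  qed
qed

lemma has_derivative_inv_into:
  fixes G :: "'a::euclidean_space \<Rightarrow> 'a"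
  assumes D: "open D" and G: "continuous_on D G" "inj_on G D"
    and G': "\<And>x. x \<in> D \<Longrightarrow> (G has_derivative G' x) (at x)"
    and right_inverse: "\<And>x w. x \<in> D \<Longrightarrow> G' x (Ginv x w) = w"
    and y: "y \<in> G ` D"
  shows "(inv_into D G has_derivative Ginv (inv_into D G y)) (at y)"
proof -
  have in_D: "inv_into D G y \<in> D"
    using y by (rule inv_into_into)
  have "(inv_into D G has_derivative Ginv (inv_into D G y)) (at (G (inv_into D G y)))"
  proof (rule has_derivative_inverse_strong[OF D in_D G(1)])
    show "inv_into D G (G x) = x" if "x \<in> D" for x
      using G(2) that by simp
    show "(G has_derivative G' (inv_into D G y)) (at (inv_into D G y))"
      using in_D by (rule G')
    show "G' (inv_into D G y) \<circ> Ginv (inv_into D G y) = id"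
      using right_inverse[OF in_D] by (simp add: fun_eq_iff)
  qed
  then show ?thesis
    using y by (simp add: f_inv_into_f)
qed

text \<open>Inverse function theorem: the derivative of the inverse at G x is the inverse of the
  derivative of G at x, which is a smooth function of x.\<close>
lemma smooth_on_inv_into:
  fixes G :: "real^'k \<Rightarrow> real^'k"
  assumes D: "open D" and G: "smooth_on D G" and inj_G: "inj_on G D"
    and inj_deriv: "\<And>x G'. x \<in> D \<Longrightarrow> (G has_derivative G') (at x) \<Longrightarrow> inj G'"
  shows "smooth_on (G ` D) (inv_into D G)"
proof -
  obtain G' where G': "\<forall>x\<in>D. (G has_derivative G' x) (at x within D)" "\<forall>v. smooth_on D (\<lambda>x. G' x v)"
    using smooth_onD(2)[OF G] by blast
  have dG: "(G has_derivative G' x) (at x)" if "x \<in> D" for x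
    using G'(1) that at_within_open[OF that D] by metis
  have lin: "linear (G' x)" if "x \<in> D" for x
    using dG[OF that] by (rule has_derivative_linear)
  obtain Ginv where G_Ginv: "\<And>x w. x \<in> D \<Longrightarrow> G' x (Ginv x w) = w"
    and Ginv: "\<And>w. smooth_on D (\<lambda>x. Ginv x w)"
    using smooth_on_inverse_linear[of D G', OF lin inj_deriv[OF _ dG] G'(2)[rule_format]] by blast
  show ?thesis
  proof (rule smooth_on_derivative_factors_through[OF _ _ Ginv])
    show "inv_into D G ` G ` D \<subseteq> D"
      by (auto simp: inv_into_into)
    show "(inv_into D G has_derivative Ginv (inv_into D G y)) (at y within G ` D)" if "y \<in> G ` D" for y
      using has_derivative_inv_into[OF D smooth_onD(1)[OF G] inj_G dG G_Ginv that]
      by (rule has_derivative_at_withinI)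
  qed
qed

section \<open>Convergence of Sinkhorn scaling\<close>

definition row_sum :: "real^'m^'n \<Rightarrow> 'n \<Rightarrow> real" where
  "row_sum B i = (\<Sum>j\<in>UNIV. B $ i $ j)"

definition col_sum :: "real^'m^'n \<Rightarrow> 'm \<Rightarrow> real" where
  "col_sum B j = (\<Sum>i\<in>UNIV. B $ i $ j)"

definition diag_equiv :: "real^'m^'n \<Rightarrow> real^'m^'n \<Rightarrow> bool" where
  "diag_equiv A B \<longleftrightarrow>
     (\<exists>x y. (\<forall>i. x i > 0) \<and> (\<forall>j. y j > 0) \<and> (\<forall>i j. B $ i $ j = x i * A $ i $ j * y j))"

lemma pos_matricesD: "B \<in> pos_matrices \<Longrightarrow> B $ i $ j > 0"
  by (simp add: pos_matrices_def)

lemma pos_simplexD: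
  assumes "r \<in> pos_simplex"
  shows "r $ i > 0" "(\<Sum>i\<in>UNIV. r $ i) = 1"
  using assms by (simp_all add: pos_simplex_def)

lemma row_sum_pos: "B \<in> pos_matrices \<Longrightarrow> row_sum B i > 0"
  unfolding row_sum_def by (intro sum_pos) (auto dest: pos_matricesD)

lemma col_sum_pos: "B \<in> pos_matrices \<Longrightarrow> col_sum B j > 0"
  unfolding col_sum_def by (intro sum_pos) (auto dest: pos_matricesD)

lemma sum_row_sum_eq_sum_col_sum: "(\<Sum>i\<in>UNIV. row_sum B i) = (\<Sum>j\<in>UNIV. col_sum B j)"
  unfolding row_sum_def col_sum_def by (rule sum.swap)

lemma row_scale_nth: "row_scale r B $ i $ j = r $ i * B $ i $ j / row_sum B i"
  by (simp add: row_scale_def row_sum_def)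

lemma col_scale_nth: "col_scale c B $ i $ j = c $ j * B $ i $ j / col_sum B j"
  by (simp add: col_scale_def col_sum_def)

lemma row_scale_pos: "B \<in> pos_matrices \<Longrightarrow> (\<And>i. r $ i > 0) \<Longrightarrow> row_scale r B \<in> pos_matrices"
  by (simp add: pos_matrices_def row_scale_nth row_sum_pos)

lemma col_scale_pos: "B \<in> pos_matrices \<Longrightarrow> (\<And>j. c $ j > 0) \<Longrightarrow> col_scale c B \<in> pos_matrices"
  by (simp add: pos_matrices_def col_scale_nth col_sum_pos)

lemma row_sum_row_scale: "B \<in> pos_matrices \<Longrightarrow> row_sum (row_scale r B) i = r $ i"
  using row_sum_pos[of B i]
  by (simp add: row_sum_def[of "row_scale r B"] row_scale_nth
      flip: sum_divide_distrib sum_distrib_left row_sum_def)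

lemma col_sum_col_scale: "B \<in> pos_matrices \<Longrightarrow> col_sum (col_scale c B) j = c $ j"
  using col_sum_pos[of B j]
  by (simp add: col_sum_def[of "col_scale c B"] col_scale_nth
      flip: sum_divide_distrib sum_distrib_left col_sum_def)

lemma diag_equiv_refl: "diag_equiv A A"
  unfolding diag_equiv_def by (intro exI[of _ "\<lambda>i. 1"] exI[of _ "\<lambda>j. 1"]) simp

lemma diag_equiv_pos: "A \<in> pos_matrices \<Longrightarrow> diag_equiv A B \<Longrightarrow> B \<in> pos_matrices"
  unfolding diag_equiv_def pos_matrices_def by auto

lemma diag_equiv_row_scale:
  assumes "diag_equiv A B" "B \<in> pos_matrices" "\<And>i. r $ i > 0"
  shows "diag_equiv A (row_scale r B)"
proof -
  obtain x y where "\<forall>i. x i > 0" "\<forall>j. y j > 0" and B: "\<forall>i j. B $ i $ j = x i * A $ i $ j * y j"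
    using assms(1) unfolding diag_equiv_def by blast
  with row_sum_pos[OF assms(2)] assms(3) show ?thesis
    unfolding diag_equiv_def
    by (intro exI[of _ "\<lambda>i. r $ i * x i / row_sum B i"] exI[of _ y]) (simp add: row_scale_nth)
qed

lemma diag_equiv_col_scale:
  assumes "diag_equiv A B" "B \<in> pos_matrices" "\<And>j. c $ j > 0"
  shows "diag_equiv A (col_scale c B)"
proof -
  obtain x y where "\<forall>i. x i > 0" "\<forall>j. y j > 0" and B: "\<forall>i j. B $ i $ j = x i * A $ i $ j * y j"
    using assms(1) unfolding diag_equiv_def by blast
  with col_sum_pos[OF assms(2)] assms(3) show ?thesis
    unfolding diag_equiv_def
    by (intro exI[of _ x] exI[of _ "\<lambda>j. c $ j * y j / col_sum B j"]) (simp add: col_scale_nth)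
qed

text \<open>Unlike diagonal equivalence itself, the cross-ratio condition is closed, so it passes to
  limits of Sinkhorn iterates.\<close>
lemma diag_equiv_iff_cross_ratios:
  fixes A B :: "real^'m^'n"
  assumes A: "A \<in> pos_matrices" and B: "B \<in> pos_matrices"
  shows "diag_equiv A B \<longleftrightarrow>
    (\<forall>i j p l. B $ p $ j * B $ i $ l * (A $ i $ j * A $ p $ l) = B $ i $ j * B $ p $ l * (A $ p $ j * A $ i $ l))"
proof
  assume "diag_equiv A B"
  then obtain x y where "\<forall>i j. B $ i $ j = x i * A $ i $ j * y j"
    unfolding diag_equiv_def by blast
  then show "\<forall>i j p l. B $ p $ j * B $ i $ l * (A $ i $ j * A $ p $ l) = B $ i $ j * B $ p $ l * (A $ p $ j * A $ i $ l)"
    by (simp add: algebra_simps)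
next
  assume cross: "\<forall>i j p l. B $ p $ j * B $ i $ l * (A $ i $ j * A $ p $ l) = B $ i $ j * B $ p $ l * (A $ p $ j * A $ i $ l)"
  obtain i0 :: 'n and j0 :: 'm where True by blast
  define x where "x i = B $ i $ j0 / A $ i $ j0" for i
  define y where "y j = B $ i0 $ j * A $ i0 $ j0 / (A $ i0 $ j * B $ i0 $ j0)" for j
  have "B $ i $ j = x i * A $ i $ j * y j" for i j
  proof -
    have "B $ i0 $ j0 * (A $ i0 $ j * A $ i $ j0) \<noteq> 0"
      using A B by (simp add: pos_matricesD less_imp_neq[symmetric])
    then show ?thesis
      using cross[rule_format, of i j i0 j0] A B
      by (simp add: x_def y_def pos_matricesD field_simps)
  qed
  moreover have "x i > 0" "y j > 0" for i j
    using A B by (simp_all add: x_def y_def pos_matricesD)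
  ultimately show "diag_equiv A B"
    unfolding diag_equiv_def by blast
qed

lemma double_sum_nonneg_eq_0:
  fixes f :: "'i::finite \<Rightarrow> 'j::finite \<Rightarrow> 'a::ordered_comm_monoid_add"
  assumes nonneg: "\<And>i j. f i j \<ge> 0" and sum0: "(\<Sum>i\<in>UNIV. \<Sum>j\<in>UNIV. f i j) = 0"
  shows "f i j = 0"
proof -
  have "\<forall>i\<in>UNIV. (\<Sum>j\<in>UNIV. f i j) = 0"
    using sum0 nonneg by (subst sum_nonneg_eq_0_iff[symmetric]) (auto intro: sum_nonneg)
  then show ?thesis
    using nonneg by (simp add: sum_nonneg_eq_0_iff)
qed

lemma sum_pairing_equal_marginals:
  assumes rows: "\<And>i. row_sum B i = row_sum C i" and cols: "\<And>j. col_sum B j = col_sum C j"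
  shows "(\<Sum>i\<in>UNIV. \<Sum>j\<in>UNIV. (B $ i $ j - C $ i $ j) * (a i + b j)) = 0"
proof -
  have "(\<Sum>i\<in>UNIV. \<Sum>j\<in>UNIV. (B $ i $ j - C $ i $ j) * (a i + b j))
      = (\<Sum>i\<in>UNIV. \<Sum>j\<in>UNIV. (B $ i $ j - C $ i $ j) * a i)
        + (\<Sum>i\<in>UNIV. \<Sum>j\<in>UNIV. (B $ i $ j - C $ i $ j) * b j)"
    by (simp add: distrib_left sum.distrib)
  also have "\<dots> = (\<Sum>i\<in>UNIV. a i * (row_sum B i - row_sum C i))
      + (\<Sum>j\<in>UNIV. b j * (col_sum B j - col_sum C j))"
    by (subst (2) sum.swap) (simp add: row_sum_def col_sum_def sum_distrib_left sum_subtractf algebra_simps)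
  also have "\<dots> = 0"
    by (simp add: rows cols)
  finally show ?thesis .
qed

text \<open>If B = e^(a_i + b_j) C entrywise and B, C have the same marginals, then
  the sum of (B_ij - C_ij)(a_i + b_j) vanishes; each summand is nonnegative because exp is
  increasing, so all of them vanish.\<close>
lemma diag_equiv_marginals_unique:
  assumes A: "A \<in> pos_matrices" and B: "diag_equiv A B" and C: "diag_equiv A C"
    and rows: "\<And>i. row_sum B i = row_sum C i" and cols: "\<And>j. col_sum B j = col_sum C j"
  shows "B = C"
proof -
  obtain x1 y1 where xy1: "\<forall>i. x1 i > 0" "\<forall>j. y1 j > 0" "\<forall>i j. B $ i $ j = x1 i * A $ i $ j * y1 j"
    using B unfolding diag_equiv_def by blast
  obtain x2 y2 where xy2: "\<forall>i. x2 i > 0" "\<forall>j. y2 j > 0" "\<forall>i j. C $ i $ j = x2 i * A $ i $ j * y2 j"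
    using C unfolding diag_equiv_def by blast
  define a where "a i = ln (x1 i / x2 i)" for i
  define b where "b j = ln (y1 j / y2 j)" for j
  have B_eq: "B $ i $ j = exp (a i + b j) * C $ i $ j" for i j
  proof -
    have "exp (a i + b j) = x1 i / x2 i * (y1 j / y2 j)"
      using xy1 xy2 by (simp add: a_def b_def exp_add)
    moreover have "x2 i \<noteq> 0" "y2 j \<noteq> 0"
      using xy2 by (simp_all add: less_imp_neq[symmetric])
    ultimately show ?thesis
      using xy1(3) xy2(3) by simp
  qed
  have nonneg: "(B $ i $ j - C $ i $ j) * (a i + b j) \<ge> 0" for i j
  proof -
    have "(exp (a i + b j) - 1) * (a i + b j) \<ge> 0"
      by (cases "a i + b j \<ge> 0") (auto intro: mult_nonpos_nonpos)
    moreover have "(B $ i $ j - C $ i $ j) * (a i + b j) = C $ i $ j * ((exp (a i + b j) - 1) * (a i + b j))"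
      by (simp add: B_eq algebra_simps)
    ultimately show ?thesis
      using pos_matricesD[OF diag_equiv_pos[OF A C], of i j] by (metis mult_nonneg_nonneg less_imp_le)
  qed
  have "B $ i $ j = C $ i $ j" for i j
  proof (cases "a i + b j = 0")
    case False
    with double_sum_nonneg_eq_0[OF nonneg sum_pairing_equal_marginals[OF rows cols], of i j]
    show ?thesis by simp
  qed (simp add: B_eq)
  then show ?thesis
    by (simp add: vec_eq_iff)
qed

definition KL :: "('i::finite \<Rightarrow> real) \<Rightarrow> ('i \<Rightarrow> real) \<Rightarrow> real" where
  "KL p q = (\<Sum>i\<in>UNIV. p i * ln (p i / q i))"

lemma mult_ln_divide_ge:
  fixes p q :: real
  assumes "p > 0" "q > 0"
  shows "p - q \<le> p * ln (p / q)"
    and "p * ln (p / q) = p - q \<Longrightarrow> p = q"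
proof -
  have ln_eq: "p * ln (p / q) - (p - q) = p * (q / p - 1 - ln (q / p))"
    using assms by (simp add: ln_div field_simps)
  have "ln (q / p) \<le> q / p - 1"
    using assms by (intro ln_le_minus_one) simp
  then show "p - q \<le> p * ln (p / q)"
    using ln_eq assms(1) by (smt (verit) mult_nonneg_nonneg)
  assume "p * ln (p / q) = p - q"
  then have "ln (q / p) = q / p - 1"
    using ln_eq assms(1) by simp
  then have "q / p = 1"
    using assms by (intro ln_eq_minus_one) simp_all
  then show "p = q"
    using assms(1) by simp
qed

lemma KL_nonneg:
  assumes "\<And>i. p i > 0" "\<And>i. q i > 0" "(\<Sum>i\<in>UNIV. p i) = (\<Sum>i\<in>UNIV. q i)"
  shows "KL p q \<ge> 0"
proof -
  have "0 = (\<Sum>i\<in>UNIV. p i - q i)"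
    using assms(3) by (simp add: sum_subtractf)
  also have "\<dots> \<le> KL p q"
    unfolding KL_def using assms(1,2) by (intro sum_mono mult_ln_divide_ge(1))
  finally show ?thesis .
qed

lemma KL_eq_0_imp_eq:
  assumes "\<And>i. p i > 0" "\<And>i. q i > 0" "(\<Sum>i\<in>UNIV. p i) = (\<Sum>i\<in>UNIV. q i)" "KL p q = 0"
  shows "p = q"
proof
  fix i
  have "(\<Sum>i\<in>UNIV. p i * ln (p i / q i) - (p i - q i)) = 0"
    using assms(3,4) by (simp add: KL_def sum_subtractf)
  moreover have "\<forall>i. p i * ln (p i / q i) - (p i - q i) \<ge> 0"
    using assms(1,2) mult_ln_divide_ge(1) by simp
  ultimately have "p i * ln (p i / q i) = p i - q i"
    by (simp add: sum_nonneg_eq_0_iff)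
  then show "p i = q i"
    using mult_ln_divide_ge(2)[OF assms(1,2)] by blast
qed

lemma LIMSEQ_unique_limit_point:
  fixes X :: "nat \<Rightarrow> 'a::heine_borel"
  assumes "bounded (range X)"
    and limit_points: "\<And>\<sigma> L. strict_mono \<sigma> \<Longrightarrow> (X \<circ> \<sigma>) \<longlonglongrightarrow> L \<Longrightarrow> L = L0"
  shows "X \<longlonglongrightarrow> L0"
proof (rule ccontr)
  assume "\<not> X \<longlonglongrightarrow> L0"
  then obtain e where "e > 0" and far: "\<forall>N. \<exists>n\<ge>N. \<not> dist (X n) L0 < e"
    unfolding lim_sequentially by blast
  define T where "T = {n. \<not> dist (X n) L0 < e}"
  have "infinite T"
    unfolding T_def infinite_nat_iff_unbounded_le using far by blast
  then obtain \<tau> :: "nat \<Rightarrow> nat" where \<tau>: "strict_mono \<tau>" "\<And>n. \<tau> n \<in> T"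
    using infinite_enumerate by blast
  have "bounded (range (X \<circ> \<tau>))"
    using assms(1) by (rule bounded_subset) auto
  then obtain \<sigma> L where \<sigma>: "strict_mono \<sigma>" and lim: "((X \<circ> \<tau>) \<circ> \<sigma>) \<longlonglongrightarrow> L"
    using bounded_imp_convergent_subsequence by blast
  have "L = L0"
    using limit_points[OF strict_mono_o[OF \<tau>(1) \<sigma>]] lim by (simp add: o_assoc)
  with lim \<open>e > 0\<close> obtain N where "\<forall>n\<ge>N. dist (X (\<tau> (\<sigma> n))) L0 < e"
    unfolding lim_sequentially by auto
  then have "\<tau> (\<sigma> N) \<notin> T"
    by (simp add: T_def)
  with \<tau>(2) show False by blast
qed

definition sinkhorn_potential :: "real^'m^'n \<Rightarrow> real^'n \<Rightarrow> real^'m \<Rightarrow> real^'m^'n \<Rightarrow> real" where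
  "sinkhorn_potential A r c B = (\<Sum>i\<in>UNIV. \<Sum>j\<in>UNIV. r $ i * c $ j * ln (B $ i $ j / A $ i $ j))"

lemma sinkhorn_potential_row_scale:
  assumes A: "A \<in> pos_matrices" and B: "B \<in> pos_matrices" and r: "\<And>i. r $ i > 0"
    and c: "(\<Sum>j\<in>UNIV. c $ j) = 1"
  shows "sinkhorn_potential A r c (row_scale r B) = sinkhorn_potential A r c B + KL (vec_nth r) (row_sum B)"
proof -
  have "ln (row_scale r B $ i $ j / A $ i $ j) = ln (r $ i / row_sum B i) + ln (B $ i $ j / A $ i $ j)" for i j
  proof -
    have "row_scale r B $ i $ j / A $ i $ j = (r $ i / row_sum B i) * (B $ i $ j / A $ i $ j)"
      by (simp add: row_scale_nth)
    then show ?thesis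
      by (simp only: ln_mult_pos r row_sum_pos[OF B] pos_matricesD[OF A] pos_matricesD[OF B]
          divide_pos_pos)
  qed
  then have "sinkhorn_potential A r c (row_scale r B)
      = (\<Sum>i\<in>UNIV. \<Sum>j\<in>UNIV. r $ i * c $ j * ln (r $ i / row_sum B i)) + sinkhorn_potential A r c B"
    by (simp add: sinkhorn_potential_def distrib_left sum.distrib)
  also have "(\<Sum>i\<in>UNIV. \<Sum>j\<in>UNIV. r $ i * c $ j * ln (r $ i / row_sum B i))
      = (\<Sum>i\<in>UNIV. r $ i * ln (r $ i / row_sum B i) * (\<Sum>j\<in>UNIV. c $ j))"
    by (rule sum.cong[OF refl]) (simp add: sum_distrib_right[symmetric] mult_ac)
  finally show ?thesis
    by (simp add: c KL_def)
qed

lemma sinkhorn_potential_col_scale: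
  assumes A: "A \<in> pos_matrices" and B: "B \<in> pos_matrices" and c: "\<And>j. c $ j > 0"
    and r: "(\<Sum>i\<in>UNIV. r $ i) = 1"
  shows "sinkhorn_potential A r c (col_scale c B) = sinkhorn_potential A r c B + KL (vec_nth c) (col_sum B)"
proof -
  have "ln (col_scale c B $ i $ j / A $ i $ j) = ln (c $ j / col_sum B j) + ln (B $ i $ j / A $ i $ j)" for i j
  proof -
    have "col_scale c B $ i $ j / A $ i $ j = (c $ j / col_sum B j) * (B $ i $ j / A $ i $ j)"
      by (simp add: col_scale_nth)
    then show ?thesis
      by (simp only: ln_mult_pos c col_sum_pos[OF B] pos_matricesD[OF A] pos_matricesD[OF B]
          divide_pos_pos)
  qed
  then have "sinkhorn_potential A r c (col_scale c B)
      = (\<Sum>i\<in>UNIV. r $ i) * (\<Sum>j\<in>UNIV. c $ j * ln (c $ j / col_sum B j)) + sinkhorn_potential A r c B"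
    by (simp add: sinkhorn_potential_def distrib_left sum.distrib sum_product mult_ac)
  then show ?thesis
    by (simp add: r KL_def)
qed

lemma sum_member_lower_bound:
  fixes t u :: "'a \<Rightarrow> 'b::ordered_ab_group_add"
  assumes "finite I" "p \<in> I" "\<And>i. i \<in> I \<Longrightarrow> t i \<le> u i"
  shows "sum t I - sum u I + u p \<le> t p"
proof -
  have "sum t (I - {p}) \<le> sum u (I - {p})"
    by (rule sum_mono) (use assms(3) in auto)
  then show ?thesis
    using assms(1,2) by (simp add: sum.remove)
qed

declare sinkhorn_iter.simps(2) [simp del]

locale sinkhorn =
  fixes A :: "real^'m^'n" and r :: "real^'n" and c :: "real^'m"
  assumes A: "A \<in> pos_matrices" and r: "r \<in> pos_simplex" and c: "c \<in> pos_simplex"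
begin

abbreviation X :: "nat \<Rightarrow> real^'m^'n" where
  "X \<equiv> sinkhorn_iter r c A"

lemma r_pos: "r $ i > 0" and r_sum: "(\<Sum>i\<in>UNIV. r $ i) = 1"
  using pos_simplexD[OF r] by blast+

lemma c_pos: "c $ j > 0" and c_sum: "(\<Sum>j\<in>UNIV. c $ j) = 1"
  using pos_simplexD[OF c] by blast+

lemma iter_pos: "X k \<in> pos_matrices"
  by (induction k) (simp_all add: sinkhorn_iter.simps(2) A row_scale_pos col_scale_pos r_pos c_pos)

lemma iter_diag_equiv: "diag_equiv A (X k)"
  by (induction k)
    (simp_all add: sinkhorn_iter.simps(2) diag_equiv_refl diag_equiv_row_scale diag_equiv_col_scale
      row_scale_pos iter_pos r_pos c_pos)

lemma col_sum_iter_Suc: "col_sum (X (Suc k)) j = c $ j"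
  by (simp add: sinkhorn_iter.simps(2) col_sum_col_scale row_scale_pos iter_pos r_pos)

lemma iter_Suc_le_1: "X (Suc k) $ i $ j \<le> 1"
proof -
  have "X (Suc k) $ i $ j \<le> col_sum (X (Suc k)) j"
    unfolding col_sum_def using iter_pos by (intro member_le_sum) (auto simp: pos_matricesD less_imp_le)
  also have "\<dots> \<le> (\<Sum>j\<in>UNIV. c $ j)"
    unfolding col_sum_iter_Suc using c_pos by (intro member_le_sum) (auto simp: less_imp_le)
  finally show ?thesis
    by (simp add: c_sum)
qed

definition potential :: "nat \<Rightarrow> real" where
  "potential k = sinkhorn_potential A r c (X (Suc k))"

lemma KL_row_sum_nonneg: "KL (vec_nth r) (row_sum (X (Suc k))) \<ge> 0"
proof (rule KL_nonneg)
  show "(\<Sum>i\<in>UNIV. r $ i) = (\<Sum>i\<in>UNIV. row_sum (X (Suc k)) i)"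
    by (simp add: sum_row_sum_eq_sum_col_sum col_sum_iter_Suc r_sum c_sum)
qed (simp_all add: r_pos row_sum_pos iter_pos)

lemma KL_col_sum_nonneg: "KL (vec_nth c) (col_sum (row_scale r (X (Suc k)))) \<ge> 0"
proof (rule KL_nonneg)
  show "(\<Sum>j\<in>UNIV. c $ j) = (\<Sum>j\<in>UNIV. col_sum (row_scale r (X (Suc k))) j)"
    by (simp add: sum_row_sum_eq_sum_col_sum[symmetric] row_sum_row_scale iter_pos r_sum c_sum)
qed (simp_all add: c_pos col_sum_pos row_scale_pos iter_pos r_pos)

lemma potential_Suc:
  "potential (Suc k) = potential k + KL (vec_nth r) (row_sum (X (Suc k)))
     + KL (vec_nth c) (col_sum (row_scale r (X (Suc k))))"
  unfolding potential_def sinkhorn_iter.simps(2)[of r c A "Suc k"]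
  by (simp add: sinkhorn_potential_col_scale sinkhorn_potential_row_scale A iter_pos row_scale_pos
      r_pos c_pos r_sum c_sum)

lemma potential_incseq: "incseq potential"
  unfolding incseq_Suc_iff potential_Suc using KL_row_sum_nonneg KL_col_sum_nonneg by simp

lemma potential_term_le:
  "r $ i * c $ j * ln (X (Suc k) $ i $ j / A $ i $ j) \<le> r $ i * c $ j * ln (1 / A $ i $ j)"
proof -
  have "ln (X (Suc k) $ i $ j / A $ i $ j) \<le> ln (1 / A $ i $ j)"
    using iter_Suc_le_1[of k i j] pos_matricesD[OF iter_pos] pos_matricesD[OF A]
    by (simp add: divide_right_mono less_imp_le)
  then show ?thesis
    using r_pos[of i] c_pos[of j] by (simp add: mult_left_mono)
qed

lemma potential_le: "potential k \<le> sinkhorn_potential A r c 1"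
  unfolding potential_def sinkhorn_potential_def
  by (intro sum_mono) (simp add: potential_term_le)

lemma KL_row_sum_tendsto_0: "(\<lambda>k. KL (vec_nth r) (row_sum (X (Suc k)))) \<longlonglongrightarrow> 0"
proof -
  obtain L where "potential \<longlonglongrightarrow> L"
    using incseq_convergent[OF potential_incseq allI[OF potential_le]] by blast
  then have "(\<lambda>k. potential (Suc k) - potential k) \<longlonglongrightarrow> L - L"
    by (intro tendsto_diff LIMSEQ_Suc)
  then have "(\<lambda>k. potential (Suc k) - potential k) \<longlonglongrightarrow> 0"
    by simp
  then show ?thesis
  proof (rule real_tendsto_sandwich[OF _ _ tendsto_const, rotated 2])
    show "\<forall>\<^sub>F k in sequentially. 0 \<le> KL (vec_nth r) (row_sum (X (Suc k)))"
      using KL_row_sum_nonneg by simp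
    show "\<forall>\<^sub>F k in sequentially. KL (vec_nth r) (row_sum (X (Suc k))) \<le> potential (Suc k) - potential k"
      using potential_Suc KL_col_sum_nonneg by simp
  qed
qed

lemma potential_term_ge:
  "potential 0 - sinkhorn_potential A r c 1 + r $ p * c $ q * ln (1 / A $ p $ q)
     \<le> r $ p * c $ q * ln (X (Suc k) $ p $ q / A $ p $ q)"
proof -
  define t where "t ij = (case ij of (i, j) \<Rightarrow> r $ i * c $ j * ln (X (Suc k) $ i $ j / A $ i $ j))" for ij
  define u where "u ij = (case ij of (i, j) \<Rightarrow> r $ i * c $ j * ln (1 / A $ i $ j))" for ij
  have "potential k = sum t UNIV" "sinkhorn_potential A r c 1 = sum u UNIV"
    by (simp_all add: potential_def sinkhorn_potential_def t_def u_def sum.cartesian_product)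
  moreover have "t ij \<le> u ij" for ij
    unfolding t_def u_def by (simp add: potential_term_le split: prod.split)
  ultimately have "potential k - sinkhorn_potential A r c 1 + u (p, q) \<le> t (p, q)"
    using sum_member_lower_bound[of UNIV "(p, q)" t u] by simp
  moreover have "potential 0 \<le> potential k"
    using potential_incseq by (simp add: incseq_def)
  ultimately show ?thesis
    by (simp add: t_def u_def)
qed

text \<open>Since the potential only increases and each of its terms is bounded above, no single
  term can tend to minus infinity.\<close>
lemma iter_lower_bound: "\<exists>\<delta>>0. \<forall>k. \<delta> \<le> X (Suc k) $ p $ q"
proof -
  define K where "K = potential 0 - sinkhorn_potential A r c 1 + r $ p * c $ q * ln (1 / A $ p $ q)"
  have rc: "r $ p * c $ q > 0"
    using r_pos c_pos by simp
  have "A $ p $ q * exp (K / (r $ p * c $ q)) \<le> X (Suc k) $ p $ q" for k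
  proof -
    have pos: "A $ p $ q > 0" "X (Suc k) $ p $ q > 0"
      using pos_matricesD[OF A] pos_matricesD[OF iter_pos] by auto
    have "K / (r $ p * c $ q) \<le> ln (X (Suc k) $ p $ q / A $ p $ q)"
      using potential_term_ge[of p q k] rc by (simp add: K_def divide_le_eq mult.commute)
    then have "exp (K / (r $ p * c $ q)) \<le> X (Suc k) $ p $ q / A $ p $ q"
      using pos by (metis divide_pos_pos exp_le_cancel_iff exp_ln)
    then show ?thesis
      using pos by (simp add: field_simps)
  qed
  moreover have "A $ p $ q * exp (K / (r $ p * c $ q)) > 0"
    using pos_matricesD[OF A] by simp
  ultimately show ?thesis
    by blast
qed

lemma iter_Suc_bounded: "bounded (range (\<lambda>k. X (Suc k)))"
proof -
  have "norm (X (Suc k)) \<le> norm (1 :: real^'m^'n)" for k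
  proof (intro norm_le_componentwise_cart)
    fix i j
    show "norm (X (Suc k) $ i $ j) \<le> norm ((1 :: real^'m^'n) $ i $ j)"
      using iter_Suc_le_1[of k i j] pos_matricesD[OF iter_pos, of "Suc k" i j] by simp
  qed
  then show ?thesis
    unfolding bounded_iff by blast
qed

context
  fixes \<sigma> :: "nat \<Rightarrow> nat" and Q :: "real^'m^'n"
  assumes subseq: "strict_mono \<sigma>" and lim: "(\<lambda>k. X (Suc (\<sigma> k))) \<longlonglongrightarrow> Q"
begin

lemma limit_point_entries: "(\<lambda>k. X (Suc (\<sigma> k)) $ i $ j) \<longlonglongrightarrow> Q $ i $ j"
  by (intro tendsto_vec_nth lim)

lemma limit_point_pos: "Q \<in> pos_matrices"
  unfolding pos_matrices_def
proof (intro CollectI allI)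
  fix i j
  obtain \<delta> where "\<delta> > 0" "\<forall>k. \<delta> \<le> X (Suc k) $ i $ j"
    using iter_lower_bound by blast
  then show "Q $ i $ j > 0"
    using LIMSEQ_le_const[OF limit_point_entries, of \<delta>] by force
qed

lemma limit_point_col_sum: "col_sum Q j = c $ j"
proof -
  have "(\<lambda>k. col_sum (X (Suc (\<sigma> k))) j) \<longlonglongrightarrow> col_sum Q j"
    unfolding col_sum_def by (intro tendsto_sum limit_point_entries)
  then show ?thesis
    by (simp add: col_sum_iter_Suc LIMSEQ_const_iff)
qed

lemma limit_point_diag_equiv: "diag_equiv A Q"
  unfolding diag_equiv_iff_cross_ratios[OF A limit_point_pos]
proof (intro allI)
  fix i j p l
  let ?f = "\<lambda>B::real^'m^'n. B $ p $ j * B $ i $ l * (A $ i $ j * A $ p $ l) - B $ i $ j * B $ p $ l * (A $ p $ j * A $ i $ l)"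
  have "(\<lambda>k. ?f (X (Suc (\<sigma> k)))) \<longlonglongrightarrow> ?f Q"
    by (intro tendsto_diff tendsto_mult tendsto_const limit_point_entries)
  moreover have "?f (X (Suc (\<sigma> k))) = 0" for k
    using iter_diag_equiv diag_equiv_iff_cross_ratios[OF A iter_pos] by simp
  ultimately have "?f Q = 0"
    by (simp add: LIMSEQ_const_iff)
  then show "Q $ p $ j * Q $ i $ l * (A $ i $ j * A $ p $ l) = Q $ i $ j * Q $ p $ l * (A $ p $ j * A $ i $ l)"
    by simp
qed

lemma limit_point_row_sum: "row_sum Q i = r $ i"
proof -
  have "vec_nth r = row_sum Q"
  proof (rule KL_eq_0_imp_eq)
    have "(\<lambda>k. KL (vec_nth r) (row_sum (X (Suc (\<sigma> k))))) \<longlonglongrightarrow> KL (vec_nth r) (row_sum Q)"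
      unfolding KL_def row_sum_def using row_sum_pos[OF limit_point_pos] r_pos
      by (intro tendsto_sum tendsto_mult tendsto_const tendsto_ln tendsto_divide limit_point_entries)
        (simp_all add: row_sum_def less_imp_neq[symmetric])
    moreover have "(\<lambda>k. KL (vec_nth r) (row_sum (X (Suc (\<sigma> k))))) \<longlonglongrightarrow> 0"
      using LIMSEQ_subseq_LIMSEQ[OF KL_row_sum_tendsto_0 subseq] by (simp add: o_def)
    ultimately show "KL (vec_nth r) (row_sum Q) = 0"
      by (rule LIMSEQ_unique)
    show "(\<Sum>i\<in>UNIV. r $ i) = (\<Sum>i\<in>UNIV. row_sum Q i)"
      by (simp add: sum_row_sum_eq_sum_col_sum limit_point_col_sum r_sum c_sum)
  qed (simp_all add: r_pos row_sum_pos[OF limit_point_pos])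
  then show ?thesis
    by (simp add: fun_eq_iff)
qed

end

theorem sinkhorn_iter_converges:
  obtains L where "X \<longlonglongrightarrow> L" "diag_equiv A L" "\<And>i. row_sum L i = r $ i" "\<And>j. col_sum L j = c $ j"
proof -
  obtain \<sigma> L where "strict_mono \<sigma>" and lim: "((\<lambda>k. X (Suc k)) \<circ> \<sigma>) \<longlonglongrightarrow> L"
    using bounded_imp_convergent_subsequence[OF iter_Suc_bounded] by blast
  note L = limit_point_diag_equiv[OF this(1) lim[unfolded o_def]]
    limit_point_row_sum[OF this(1) lim[unfolded o_def]] limit_point_col_sum[OF this(1) lim[unfolded o_def]]
  have "(\<lambda>k. X (Suc k)) \<longlonglongrightarrow> L"
  proof (rule LIMSEQ_unique_limit_point[OF iter_Suc_bounded])
    fix \<tau> Q assume \<tau>: "strict_mono \<tau>" and "((\<lambda>k. X (Suc k)) \<circ> \<tau>) \<longlonglongrightarrow> Q"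
    then have lim_Q: "(\<lambda>k. X (Suc (\<tau> k))) \<longlonglongrightarrow> Q"
      by (simp add: o_def)
    show "Q = L"
      using limit_point_diag_equiv[OF \<tau> lim_Q] limit_point_row_sum[OF \<tau> lim_Q] limit_point_col_sum[OF \<tau> lim_Q] L
      by (intro diag_equiv_marginals_unique[OF A]) simp_all
  qed
  then have "X \<longlonglongrightarrow> L"
    by (rule LIMSEQ_imp_Suc)
  with L that show ?thesis
    by blast
qed

end

section \<open>The Sinkhorn limit as a smooth inverse\<close>

lemma sum_decomposition_unique:
  fixes a a' :: "'n::finite \<Rightarrow> real" and b b' :: "'m::finite \<Rightarrow> real"
  assumes eq: "\<And>i j. a i + b j = a' i + b' j" and sums: "(\<Sum>i\<in>UNIV. a i) = (\<Sum>i\<in>UNIV. a' i)"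
  shows "a = a'" "b = b'"
proof -
  obtain j0 :: 'm where True by blast
  define d where "d = b' j0 - b j0"
  have a_diff: "a i - a' i = d" for i
    using eq[of i j0] by (simp add: d_def)
  have "real CARD('n) * d = (\<Sum>i\<in>UNIV. a i - a' i)"
    by (simp add: a_diff)
  also have "\<dots> = 0"
    by (simp add: sum_subtractf sums)
  finally have "d = 0"
    by simp
  with a_diff show "a = a'"
    by (simp add: fun_eq_iff)
  then show "b = b'"
    using eq by (simp add: fun_eq_iff)
qed

text \<open>Pairing the row equations with a and the column equations with b gives
  the sum of P_ij (a_i + b_j)^2 as minus the square of the sum of a.\<close>
lemma pos_matrix_scaling_kernel:
  fixes P :: "real^'m^'n" and a :: "'n \<Rightarrow> real" and b :: "'m \<Rightarrow> real"
  assumes P: "P \<in> pos_matrices"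
    and rows: "\<And>i. (\<Sum>j\<in>UNIV. P $ i $ j * (a i + b j)) + (\<Sum>i'\<in>UNIV. a i') = 0"
    and cols: "\<And>j. (\<Sum>i\<in>UNIV. P $ i $ j * (a i + b j)) = 0"
  shows "a = (\<lambda>i. 0)" "b = (\<lambda>j. 0)"
proof -
  define Sa where "Sa = (\<Sum>i\<in>UNIV. a i)"
  have row_eq: "(\<Sum>j\<in>UNIV. P $ i $ j * (a i + b j)) = - Sa" for i
    using rows[of i] by (simp add: Sa_def eq_neg_iff_add_eq_0)
  have "(\<Sum>i\<in>UNIV. \<Sum>j\<in>UNIV. P $ i $ j * (a i + b j)\<^sup>2)
      = (\<Sum>i\<in>UNIV. \<Sum>j\<in>UNIV. a i * (P $ i $ j * (a i + b j)))
        + (\<Sum>i\<in>UNIV. \<Sum>j\<in>UNIV. b j * (P $ i $ j * (a i + b j)))"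
    by (simp add: sum.distrib[symmetric] power2_eq_square algebra_simps)
  also have "\<dots> = (\<Sum>i\<in>UNIV. a i * (\<Sum>j\<in>UNIV. P $ i $ j * (a i + b j)))
        + (\<Sum>j\<in>UNIV. b j * (\<Sum>i\<in>UNIV. P $ i $ j * (a i + b j)))"
    by (subst (2) sum.swap) (simp add: sum_distrib_left)
  also have "\<dots> = (\<Sum>i\<in>UNIV. a i * - Sa)"
    by (simp add: row_eq cols)
  also have "\<dots> = - Sa\<^sup>2"
    by (simp add: Sa_def power2_eq_square sum_distrib_right sum_negf)
  finally have quad: "(\<Sum>i\<in>UNIV. \<Sum>j\<in>UNIV. P $ i $ j * (a i + b j)\<^sup>2) = - Sa\<^sup>2" .
  have nonneg: "P $ i $ j * (a i + b j)\<^sup>2 \<ge> 0" for i j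
    using pos_matricesD[OF P, of i j] by simp
  then have "(\<Sum>i\<in>UNIV. \<Sum>j\<in>UNIV. P $ i $ j * (a i + b j)\<^sup>2) \<ge> 0"
    by (intro sum_nonneg)
  with quad have "Sa\<^sup>2 \<le> 0"
    by linarith
  then have "Sa = 0"
    by simp
  with quad have quad0: "(\<Sum>i\<in>UNIV. \<Sum>j\<in>UNIV. P $ i $ j * (a i + b j)\<^sup>2) = 0"
    by simp
  have zero: "P $ i $ j * (a i + b j)\<^sup>2 = 0" for i j
    using nonneg quad0 by (rule double_sum_nonneg_eq_0)
  have "a i + b j = (\<lambda>i. 0) i + (\<lambda>j. 0) j" for i j
    using zero[of i j] pos_matricesD[OF P, of i j] by simp
  from sum_decomposition_unique[OF this] \<open>Sa = 0\<close> show "a = (\<lambda>i. 0)" "b = (\<lambda>j. 0)"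
    by (simp_all add: Sa_def)
qed

text \<open>A coordinate vector x encodes (M, u, v) by M_ij = x $ Inl (i, j), u_i = x $ Inr (Inl i) and
  v_j = x $ Inr (Inr j); it parametrises the matrix exp (u_i + v_j) M_ij^lam.\<close>
type_synonym ('n, 'm) scaling_coord = "('n \<times> 'm) + ('n + 'm)"

definition scaling_domain :: "(real^('n::finite, 'm::finite) scaling_coord) set" where
  "scaling_domain = {x. \<forall>i j. x $ Inl (i, j) > 0}"

definition scaled_matrix :: "real \<Rightarrow> real^('n::finite, 'm::finite) scaling_coord \<Rightarrow> real^'m^'n" where
  "scaled_matrix lam x = (\<chi> i j. exp (x $ Inr (Inl i) + x $ Inr (Inr j)) * x $ Inl (i, j) powr lam)"

text \<open>Adding the sum of the u_i to the row sums removes the invariance of the scaled matrix under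
  u + t, v - t; on the image of the simplices that sum is forced to be 0, since all row sums and
  all column sums then add up to 1.\<close>
definition scaling_map :: "real \<Rightarrow> real^('n::finite, 'm::finite) scaling_coord \<Rightarrow> real^('n, 'm) scaling_coord" where
  "scaling_map lam x = (\<chi> k. case k of
       Inl p \<Rightarrow> x $ Inl p
     | Inr (Inl i) \<Rightarrow> row_sum (scaled_matrix lam x) i + (\<Sum>i'\<in>UNIV. x $ Inr (Inl i'))
     | Inr (Inr j) \<Rightarrow> col_sum (scaled_matrix lam x) j)"

definition coord_embedding :: "(real^'m^'n) \<times> (real^'n) \<times> (real^'m) \<Rightarrow> real^('n::finite, 'm::finite) scaling_coord" where
  "coord_embedding = (\<lambda>(M, r, c). \<chi> k. case k of
       Inl (i, j) \<Rightarrow> M $ i $ j | Inr (Inl i) \<Rightarrow> r $ i | Inr (Inr j) \<Rightarrow> c $ j)"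

lemma scaling_coord_cases:
  obtains i j where "k = Inl (i, j)" | i where "k = Inr (Inl i)" | j where "k = Inr (Inr j)"
  by (metis obj_sumE surj_pair)

lemma scaling_coord_eqI:
  fixes x y :: "real^('n::finite, 'm::finite) scaling_coord"
  assumes "\<And>i j. x $ Inl (i, j) = y $ Inl (i, j)" "\<And>i. x $ Inr (Inl i) = y $ Inr (Inl i)"
    "\<And>j. x $ Inr (Inr j) = y $ Inr (Inr j)"
  shows "x = y"
  unfolding vec_eq_iff by (metis assms scaling_coord_cases)

lemma scaled_matrix_nth:
  "scaled_matrix lam x $ i $ j = exp (x $ Inr (Inl i) + x $ Inr (Inr j)) * x $ Inl (i, j) powr lam"
  by (simp add: scaled_matrix_def)

lemma scaling_map_nth [simp]:
  "scaling_map lam x $ Inl p = x $ Inl p"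
  "scaling_map lam x $ Inr (Inl i) = row_sum (scaled_matrix lam x) i + (\<Sum>i'\<in>UNIV. x $ Inr (Inl i'))"
  "scaling_map lam x $ Inr (Inr j) = col_sum (scaled_matrix lam x) j"
  by (simp_all add: scaling_map_def)

lemma coord_embedding_nth [simp]:
  "coord_embedding (M, r, c) $ Inl (i, j) = M $ i $ j"
  "coord_embedding (M, r, c) $ Inr (Inl i) = r $ i"
  "coord_embedding (M, r, c) $ Inr (Inr j) = c $ j"
  by (simp_all add: coord_embedding_def)

lemma open_scaling_domain: "open (scaling_domain :: (real^('n::finite, 'm::finite) scaling_coord) set)"
proof -
  have eq: "(scaling_domain :: (real^('n, 'm) scaling_coord) set) = (\<Inter>p\<in>UNIV. {x. 0 < x $ Inl p})"
    by (auto simp: scaling_domain_def)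
  have "open {x :: real^('n, 'm) scaling_coord. 0 < x $ Inl p}" for p
    by (intro open_Collect_less continuous_on_const linear_continuous_on bounded_linear_vec_nth)
  then show ?thesis
    unfolding eq by (intro open_INT) auto
qed

lemma bounded_linear_coord_embedding: "bounded_linear coord_embedding"
proof -
  have "linear coord_embedding"
    by (rule linearI) (auto simp: coord_embedding_def vec_eq_iff split: sum.splits prod.splits)
  then show ?thesis
    by (simp add: linear_conv_bounded_linear)
qed

lemma smooth_on_scaled_matrix:
  "smooth_on (scaling_domain :: (real^('n::finite, 'm::finite) scaling_coord) set) (scaled_matrix lam)"
  unfolding scaled_matrix_def
  by (intro smooth_on_vec_lambda smooth_on_mult smooth_on_exp smooth_on_add smooth_on_vec_nth
      smooth_on_powr smooth_on_linear bounded_linear_ident)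
    (simp add: scaling_domain_def)

lemma smooth_on_scaling_map:
  "smooth_on (scaling_domain :: (real^('n::finite, 'm::finite) scaling_coord) set) (scaling_map lam)"
  unfolding scaling_map_def
proof (intro smooth_on_vec_lambda)
  fix k :: "('n, 'm) scaling_coord"
  have lin: "smooth_on scaling_domain (\<lambda>x. x $ k)" for k :: "('n, 'm) scaling_coord"
    by (intro smooth_on_vec_nth smooth_on_linear bounded_linear_ident)
  have P: "smooth_on scaling_domain (\<lambda>x. scaled_matrix lam x $ i $ j)" for i j
    by (intro smooth_on_vec_nth smooth_on_scaled_matrix)
  show "smooth_on scaling_domain (\<lambda>x. case k of
       Inl p \<Rightarrow> x $ Inl p
     | Inr (Inl i) \<Rightarrow> row_sum (scaled_matrix lam x) i + (\<Sum>i'\<in>UNIV. x $ Inr (Inl i'))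
     | Inr (Inr j) \<Rightarrow> col_sum (scaled_matrix lam x) j)"
    by (cases k rule: scaling_coord_cases)
      (simp_all add: row_sum_def col_sum_def lin P smooth_on_add smooth_on_sum)
qed

lemma entry_pow_pos:
  assumes "M \<in> pos_matrices"
  shows "entry_pow lam M \<in> pos_matrices"
proof -
  have "M $ i $ j \<noteq> 0" for i j
    using pos_matricesD[OF assms, of i j] by simp
  then show ?thesis
    by (simp add: pos_matrices_def entry_pow_def)
qed

lemma scaled_matrix_pos:
  assumes "x \<in> scaling_domain"
  shows "scaled_matrix lam x \<in> pos_matrices"
proof -
  have "x $ Inl (i, j) \<noteq> 0" for i j
    using assms by (simp add: scaling_domain_def less_imp_neq[symmetric])
  then show ?thesis
    by (simp add: pos_matrices_def scaled_matrix_nth)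
qed

lemma diag_equiv_scaled_matrix:
  "diag_equiv (entry_pow lam (\<chi> i j. x $ Inl (i, j))) (scaled_matrix lam x)"
  unfolding diag_equiv_def
  by (intro exI[of _ "\<lambda>i. exp (x $ Inr (Inl i))"] exI[of _ "\<lambda>j. exp (x $ Inr (Inr j))"])
    (simp add: scaled_matrix_nth entry_pow_def exp_add)

lemma inj_on_scaling_map:
  "inj_on (scaling_map lam) (scaling_domain :: (real^('n::finite, 'm::finite) scaling_coord) set)"
proof (rule inj_onI)
  fix x y :: "real^('n, 'm) scaling_coord"
  assume x: "x \<in> scaling_domain" and y: "y \<in> scaling_domain" and eq: "scaling_map lam x = scaling_map lam y"
  let ?P = "scaled_matrix lam" and ?u = "\<lambda>z i. z $ Inr (Inl i)" and ?v = "\<lambda>z j. z $ Inr (Inr j)"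
  have M: "x $ Inl p = y $ Inl p" for p
    using arg_cong[OF eq, of "\<lambda>z. z $ Inl p"] by simp
  have rows: "row_sum (?P x) i + sum (?u x) UNIV = row_sum (?P y) i + sum (?u y) UNIV" for i
    using arg_cong[OF eq, of "\<lambda>z. z $ Inr (Inl i)"] by simp
  have cols: "col_sum (?P x) j = col_sum (?P y) j" for j
    using arg_cong[OF eq, of "\<lambda>z. z $ Inr (Inr j)"] by simp
  have "(\<Sum>i\<in>UNIV. row_sum (?P x) i + sum (?u x) UNIV) = (\<Sum>i\<in>UNIV. row_sum (?P y) i + sum (?u y) UNIV)"
    using rows by simp
  then have u_sum: "sum (?u x) UNIV = sum (?u y) UNIV"
    by (simp add: sum.distrib sum_row_sum_eq_sum_col_sum cols)
  have "?P x = ?P y"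
  proof (rule diag_equiv_marginals_unique[OF _ diag_equiv_scaled_matrix])
    show "entry_pow lam (\<chi> i j. x $ Inl (i, j)) \<in> pos_matrices"
      using x by (intro entry_pow_pos) (simp add: pos_matrices_def scaling_domain_def)
    show "diag_equiv (entry_pow lam (\<chi> i j. x $ Inl (i, j))) (?P y)"
      using diag_equiv_scaled_matrix[of lam y] by (simp add: M)
  qed (use rows u_sum cols in simp_all)
  have "?u x i + ?v x j = ?u y i + ?v y j" for i j
  proof -
    have "exp (?u x i + ?v x j) * x $ Inl (i, j) powr lam = exp (?u y i + ?v y j) * x $ Inl (i, j) powr lam"
      using arg_cong[OF \<open>?P x = ?P y\<close>, of "\<lambda>B. B $ i $ j"] by (simp add: scaled_matrix_nth M)
    moreover have "x $ Inl (i, j) powr lam > 0"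
      using x by (simp add: scaling_domain_def less_imp_neq[symmetric])
    ultimately show ?thesis
      by simp
  qed
  from sum_decomposition_unique[OF this u_sum] have "?u x = ?u y" "?v x = ?v y" .
  then show "x = y"
    by (intro scaling_coord_eqI) (simp_all add: M fun_eq_iff)
qed

definition scaled_matrix_deriv ::
    "real \<Rightarrow> real^('n::finite, 'm::finite) scaling_coord \<Rightarrow> real^('n, 'm) scaling_coord \<Rightarrow> 'n \<Rightarrow> 'm \<Rightarrow> real"
  where "scaled_matrix_deriv lam x h i j =
    scaled_matrix lam x $ i $ j * (h $ Inr (Inl i) + h $ Inr (Inr j))
    + exp (x $ Inr (Inl i) + x $ Inr (Inr j)) * (lam * x $ Inl (i, j) powr (lam - 1)) * h $ Inl (i, j)"

lemma scaled_matrix_has_derivative: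
  assumes "x \<in> scaling_domain"
  shows "((\<lambda>z. scaled_matrix lam z $ i $ j) has_derivative (\<lambda>h. scaled_matrix_deriv lam x h i j)) (at x)"
proof -
  have nth: "((\<lambda>z. z $ k) has_derivative (\<lambda>h. h $ k)) (at x)" for k :: "('a, 'b) scaling_coord"
    by (rule bounded_linear_imp_has_derivative[OF bounded_linear_vec_nth])
  have "x $ Inl (i, j) > 0"
    using assms by (simp add: scaling_domain_def)
  from has_derivative_mult[OF has_derivative_exp[OF has_derivative_add[OF nth nth]]
      DERIV_compose_FDERIV[OF has_real_derivative_powr[OF this] nth]]
  show ?thesis
    unfolding scaled_matrix_nth scaled_matrix_deriv_def
    by (rule has_derivative_eq_rhs) (simp add: fun_eq_iff algebra_simps)
qed

lemma scaling_map_derivative_nth: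
  fixes x :: "real^('n::finite, 'm::finite) scaling_coord"
  assumes x: "x \<in> scaling_domain" and G': "(scaling_map lam has_derivative G') (at x)"
  shows "G' h $ Inl p = h $ Inl p"
    and "G' h $ Inr (Inl i) = (\<Sum>j\<in>UNIV. scaled_matrix_deriv lam x h i j) + (\<Sum>i'\<in>UNIV. h $ Inr (Inl i'))"
    and "G' h $ Inr (Inr j) = (\<Sum>i\<in>UNIV. scaled_matrix_deriv lam x h i j)"
proof -
  have nth: "((\<lambda>z. z $ k) has_derivative (\<lambda>h. h $ k)) (at x)" for k :: "('n, 'm) scaling_coord"
    by (rule bounded_linear_imp_has_derivative[OF bounded_linear_vec_nth])
  have G'_nth: "((\<lambda>z. scaling_map lam z $ k) has_derivative (\<lambda>h. G' h $ k)) (at x)" for k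
    using bounded_linear_vec_nth G' by (rule bounded_linear.has_derivative)
  note P' = scaled_matrix_has_derivative[OF x]
  show "G' h $ Inl p = h $ Inl p"
    using has_derivative_unique[OF G'_nth[of "Inl p"]] nth[of "Inl p"] by (simp add: fun_eq_iff)
  have "((\<lambda>z. scaling_map lam z $ Inr (Inl i)) has_derivative
      (\<lambda>h. (\<Sum>j\<in>UNIV. scaled_matrix_deriv lam x h i j) + (\<Sum>i'\<in>UNIV. h $ Inr (Inl i')))) (at x)"
    unfolding scaling_map_nth row_sum_def by (intro has_derivative_add has_derivative_sum P' nth)
  from has_derivative_unique[OF G'_nth this]
  show "G' h $ Inr (Inl i) = (\<Sum>j\<in>UNIV. scaled_matrix_deriv lam x h i j) + (\<Sum>i'\<in>UNIV. h $ Inr (Inl i'))"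
    by (simp add: fun_eq_iff)
  have "((\<lambda>z. scaling_map lam z $ Inr (Inr j)) has_derivative (\<lambda>h. \<Sum>i\<in>UNIV. scaled_matrix_deriv lam x h i j)) (at x)"
    unfolding scaling_map_nth col_sum_def by (intro has_derivative_sum P')
  from has_derivative_unique[OF G'_nth this]
  show "G' h $ Inr (Inr j) = (\<Sum>i\<in>UNIV. scaled_matrix_deriv lam x h i j)"
    by (simp add: fun_eq_iff)
qed

lemma inj_scaling_map_derivative:
  fixes x :: "real^('n::finite, 'm::finite) scaling_coord"
  assumes x: "x \<in> scaling_domain" and G': "(scaling_map lam has_derivative G') (at x)"
  shows "inj G'"
  unfolding linear_injective_0[OF has_derivative_linear[OF G']]
proof (intro allI impI)
  fix h assume "G' h = 0"
  then have h_Inl: "h $ Inl p = 0" for p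
    using scaling_map_derivative_nth(1)[OF x G', of h p] by simp
  let ?a = "\<lambda>i. h $ Inr (Inl i)" and ?b = "\<lambda>j. h $ Inr (Inr j)"
  have deriv_h: "scaled_matrix_deriv lam x h i j = scaled_matrix lam x $ i $ j * (?a i + ?b j)" for i j
    by (simp add: scaled_matrix_deriv_def h_Inl)
  have rows: "(\<Sum>j\<in>UNIV. scaled_matrix lam x $ i $ j * (?a i + ?b j)) + (\<Sum>i'\<in>UNIV. ?a i') = 0" for i
    using scaling_map_derivative_nth(2)[OF x G', of h i] \<open>G' h = 0\<close> by (simp add: deriv_h)
  have cols: "(\<Sum>i\<in>UNIV. scaled_matrix lam x $ i $ j * (?a i + ?b j)) = 0" for j
    using scaling_map_derivative_nth(3)[OF x G', of h j] \<open>G' h = 0\<close> by (simp add: deriv_h)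
  from pos_matrix_scaling_kernel[OF scaled_matrix_pos[OF x] rows cols]
  have "?a = (\<lambda>i. 0)" "?b = (\<lambda>j. 0)" .
  then show "h = 0"
    by (intro scaling_coord_eqI) (simp_all add: h_Inl fun_eq_iff)
qed

lemma Phi_eq_scaled_matrix:
  fixes M :: "real^'m::finite^'n::finite" and r :: "real^'n" and c :: "real^'m"
  assumes "(M, r, c) \<in> pos_matrices \<times> pos_simplex \<times> pos_simplex"
  obtains x where "x \<in> scaling_domain" "scaling_map lam x = coord_embedding (M, r, c)"
    "scaled_matrix lam x = Phi lam (M, r, c)"
proof -
  have M: "M \<in> pos_matrices" and r: "r \<in> pos_simplex" and c: "c \<in> pos_simplex"
    using assms by auto
  interpret sinkhorn "entry_pow lam M" r c
    using entry_pow_pos[OF M] r c by unfold_locales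
  obtain L where "X \<longlonglongrightarrow> L" and "diag_equiv (entry_pow lam M) L"
    and rows: "\<And>i. row_sum L i = r $ i" and cols: "\<And>j. col_sum L j = c $ j"
    using sinkhorn_iter_converges by blast
  then have Phi: "Phi lam (M, r, c) = L"
    by (simp add: Phi_def sinkhorn_limit_def limI)
  obtain \<alpha> \<beta> where \<alpha>: "\<And>i. \<alpha> i > 0" and \<beta>: "\<And>j. \<beta> j > 0"
    and L: "\<And>i j. L $ i $ j = \<alpha> i * entry_pow lam M $ i $ j * \<beta> j"
    using \<open>diag_equiv (entry_pow lam M) L\<close> unfolding diag_equiv_def by blast
  define s where "s = (\<Sum>i\<in>UNIV. ln (\<alpha> i)) / real CARD('n)"
  define x :: "real^('n, 'm) scaling_coord" where "x = (\<chi> k. case k of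
       Inl (i, j) \<Rightarrow> M $ i $ j | Inr (Inl i) \<Rightarrow> ln (\<alpha> i) - s | Inr (Inr j) \<Rightarrow> ln (\<beta> j) + s)"
  have x_nth [simp]: "x $ Inl (i, j) = M $ i $ j" "x $ Inr (Inl i) = ln (\<alpha> i) - s" "x $ Inr (Inr j) = ln (\<beta> j) + s"
    for i j by (simp_all add: x_def)
  have "x \<in> scaling_domain"
    using M by (simp add: scaling_domain_def pos_matricesD)
  moreover have P: "scaled_matrix lam x = L"
    using \<alpha> \<beta> by (simp add: vec_eq_iff scaled_matrix_nth L entry_pow_def exp_add exp_diff)
  moreover have "scaling_map lam x = coord_embedding (M, r, c)"
  proof (rule scaling_coord_eqI)
    have "(\<Sum>i\<in>UNIV. x $ Inr (Inl i)) = 0"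
      by (simp add: s_def sum_subtractf)
    then show "scaling_map lam x $ Inr (Inl i) = coord_embedding (M, r, c) $ Inr (Inl i)" for i
      by (simp only: scaling_map_nth coord_embedding_nth P rows)
  qed (simp_all add: P cols)
  ultimately show ?thesis
    using that Phi by simp
qed

lemma Phi_eq_inv_into:
  fixes z :: "(real^'m::finite^'n::finite) \<times> (real^'n) \<times> (real^'m)"
  assumes "z \<in> pos_matrices \<times> pos_simplex \<times> pos_simplex"
  shows "coord_embedding z \<in> scaling_map lam ` scaling_domain"
    and "Phi lam z = scaled_matrix lam (inv_into scaling_domain (scaling_map lam) (coord_embedding z))"
proof -
  obtain M r c where z: "z = (M, r, c)"
    by (cases z) auto
  obtain x where "x \<in> scaling_domain" "scaling_map lam x = coord_embedding z" "scaled_matrix lam x = Phi lam z"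
    using Phi_eq_scaled_matrix[of M r c lam] assms unfolding z by blast
  then show "coord_embedding z \<in> scaling_map lam ` scaling_domain"
    and "Phi lam z = scaled_matrix lam (inv_into scaling_domain (scaling_map lam) (coord_embedding z))"
    using inv_into_f_f[OF inj_on_scaling_map] by (metis image_eqI)+
qed

theorem theorem1:
  fixes lam :: real
  assumes "lam > 0"
  shows "smooth_on (pos_matrices \<times> (pos_simplex :: (real^'n) set) \<times> (pos_simplex :: (real^'m) set))
           (Phi lam :: (real^'m^'n) \<times> (real^'n) \<times> (real^'m) \<Rightarrow> real^'m^'n)"
proof -
  let ?S = "pos_matrices \<times> (pos_simplex :: (real^'n) set) \<times> (pos_simplex :: (real^'m) set)"
  let ?D = "scaling_domain :: (real^('n, 'm) scaling_coord) set"
  let ?g = "inv_into ?D (scaling_map lam)"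
  have "smooth_on (scaling_map lam ` ?D) ?g"
    using open_scaling_domain smooth_on_scaling_map inj_on_scaling_map inj_scaling_map_derivative
    by (rule smooth_on_inv_into)
  then have "smooth_on ?S (\<lambda>z. ?g (coord_embedding z))"
    using smooth_on_linear[OF bounded_linear_coord_embedding]
    by (rule smooth_on_compose) (use Phi_eq_inv_into(1) in blast)
  then have "smooth_on ?S (\<lambda>z. scaled_matrix lam (?g (coord_embedding z)))"
    by (rule smooth_on_compose[OF smooth_on_scaled_matrix]) (auto intro: inv_into_into Phi_eq_inv_into(1))
  then show ?thesis
    by (rule smooth_on_cong) (simp add: Phi_eq_inv_into(2))
qed

end
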